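(* Let $\Gamma$ be a connected finite simple graph on $N\ge3$ vertices with minimum degree $d=2$ and $\varepsilon=\frac12$. Then for every vertex $v$ with $\deg v=2$ there exists $u\sim v$ with $\deg u=2$.
   Context: For a finite simple graph $\Gamma=(V,E)$ without isolated vertices, $\deg v$ is the number of neighbours of $v$ and $\mathcal N(v)=\{w\in V: w\sim v\}$. The normalized Laplacian acts on functions $f:V\to\mathbb R$ by $\Delta f(v)=f(v)-\frac{1}{\deg v}\sum_{w\sim v}f(w)$; its eigenvalues are $0=\lambda_1\le\lambda_2\le\dots\le\lambda_N$, and $\varepsilon:=\min_i|1-\lambda_i|$. $d$ denotes the minimum vertex degree. *)

theory Defs
  imports Complex_Main
begin

definition simple_graph :: "'a set \<Rightarrow> ('a \<Rightarrow> 'a \<Rightarrow> bool) \<Rightarrow> bool" where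
  "simple_graph V E \<longleftrightarrow> finite V \<and> (\<forall>x y. E x y \<longrightarrow> x \<in> V \<and> y \<in> V)
     \<and> (\<forall>x y. E x y \<longrightarrow> E y x) \<and> (\<forall>x. \<not> E x x)"

definition nbhd :: "'a set \<Rightarrow> ('a \<Rightarrow> 'a \<Rightarrow> bool) \<Rightarrow> 'a \<Rightarrow> 'a set" where
  "nbhd V E v = {w \<in> V. E v w}"

definition deg :: "'a set \<Rightarrow> ('a \<Rightarrow> 'a \<Rightarrow> bool) \<Rightarrow> 'a \<Rightarrow> nat" where
  "deg V E v = card (nbhd V E v)"

definition connected_graph :: "'a set \<Rightarrow> ('a \<Rightarrow> 'a \<Rightarrow> bool) \<Rightarrow> bool" where
  "connected_graph V E \<longleftrightarrow> V \<noteq> {} \<and> (\<forall>x\<in>V. \<forall>y\<in>V. (\<lambda>a b. E a b)\<^sup>*\<^sup>* x y)"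

definition min_degree :: "'a set \<Rightarrow> ('a \<Rightarrow> 'a \<Rightarrow> bool) \<Rightarrow> nat" where
  "min_degree V E = Min (deg V E ` V)"

definition norm_laplacian :: "'a set \<Rightarrow> ('a \<Rightarrow> 'a \<Rightarrow> bool) \<Rightarrow> ('a \<Rightarrow> real) \<Rightarrow> 'a \<Rightarrow> real" where
  "norm_laplacian V E f v = f v - (\<Sum>w\<in>nbhd V E v. f w) / real (deg V E v)"

definition laplacian_eigenvalue :: "'a set \<Rightarrow> ('a \<Rightarrow> 'a \<Rightarrow> bool) \<Rightarrow> real \<Rightarrow> bool" where
  "laplacian_eigenvalue V E mu \<longleftrightarrow>
     (\<exists>f. (\<exists>v\<in>V. f v \<noteq> 0) \<and> (\<forall>v\<in>V. norm_laplacian V E f v = mu * f v))"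

definition eps_gap :: "'a set \<Rightarrow> ('a \<Rightarrow> 'a \<Rightarrow> bool) \<Rightarrow> real" where
  "eps_gap V E = Min ((\<lambda>mu. \<bar>1 - mu\<bar>) ` {mu. laplacian_eigenvalue V E mu})"

end

theory Submission
  imports Defs "HOL-Analysis.Analysis"
begin

(* The averaging operator P = I - \<Delta> is self-adjoint for the degree-weighted inner product,
   and \<epsilon> = 1/2 puts its spectrum into [-1, -1/2] \<union> [1/2, 1].  Hence
   1/4 |f|^2 \<le> |P f|^2 \<le> |f|^2, and since every eigenvalue y of P^2 lies in [1/4, 1],
   also |P^2 g|^2 \<le> 5/4 |P g|^2 - 1/4 |g|^2.  If a vertex v of degree two had both
   neighbours a, b of degree at least three, testing the first bound on the difference of
   the indicators of a and b, and the second on the indicator of v, would give an inequality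
   between deg a and deg b that has no solution. *)

section \<open>Weighted inner products\<close>

definition wdot :: "'a set \<Rightarrow> ('a \<Rightarrow> real) \<Rightarrow> ('a \<Rightarrow> real) \<Rightarrow> ('a \<Rightarrow> real) \<Rightarrow> real" where
  "wdot V w f g = (\<Sum>x\<in>V. w x * f x * g x)"

lemma wdot_commute: "wdot V w f g = wdot V w g f"
  unfolding wdot_def by (simp add: ac_simps)

lemma wdot_cong:
  "(\<And>x. x \<in> V \<Longrightarrow> f x = f' x) \<Longrightarrow> (\<And>x. x \<in> V \<Longrightarrow> g x = g' x) \<Longrightarrow> wdot V w f g = wdot V w f' g'"
  unfolding wdot_def by (rule sum.cong) auto

lemma wdot_scale_left: "wdot V w (\<lambda>x. c * f x) g = c * wdot V w f g"
  unfolding wdot_def by (simp add: sum_distrib_left ac_simps)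

lemma wdot_scale_right: "wdot V w f (\<lambda>x. c * g x) = c * wdot V w f g"
  unfolding wdot_def by (simp add: sum_distrib_left ac_simps)

lemma wdot_add_mult_left: "wdot V w (\<lambda>x. f x + t * g x) h = wdot V w f h + t * wdot V w g h"
  unfolding wdot_def by (simp add: sum.distrib sum_distrib_left algebra_simps)

lemma wdot_bilinear:
  "wdot V w (\<lambda>x. a x + t * b x) (\<lambda>x. c x + t * d x)
     = wdot V w a c + t * (wdot V w a d + wdot V w b c) + t\<^sup>2 * wdot V w b d"
  unfolding wdot_def by (simp add: sum.distrib sum_distrib_left algebra_simps power2_eq_square)

lemma wdot_sum_right: "wdot V w g (\<lambda>y. \<Sum>f\<in>F. a f * f y) = (\<Sum>f\<in>F. a f * wdot V w g f)"
  unfolding wdot_def by (simp add: sum_distrib_left sum_distrib_right algebra_simps sum.swap[of _ V])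

lemma wdot_self_nonneg: "\<forall>x\<in>V. 0 < w x \<Longrightarrow> 0 \<le> wdot V w f f"
  unfolding wdot_def by (intro sum_nonneg) (simp add: mult.assoc less_imp_le)

lemma wdot_self_eq_0_iff:
  assumes "finite V" and "\<forall>x\<in>V. 0 < w x"
  shows "wdot V w f f = 0 \<longleftrightarrow> (\<forall>x\<in>V. f x = 0)"
proof
  assume "wdot V w f f = 0"
  then have "\<forall>x\<in>V. w x * f x * f x = 0"
    using assms sum_nonneg_eq_0_iff[of V "\<lambda>x. w x * f x * f x"] unfolding wdot_def
    by (simp add: mult.assoc less_imp_le)
  then show "\<forall>x\<in>V. f x = 0" using assms(2) by (metis less_irrefl mult_eq_0_iff)
qed (simp add: wdot_def)

lemma wdot_self_pos:
  assumes "finite V" and "\<forall>x\<in>V. 0 < w x" and "\<exists>x\<in>V. f x \<noteq> 0"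
  shows "0 < wdot V w f f"
proof -
  have "wdot V w f f \<noteq> 0" using wdot_self_eq_0_iff[OF assms(1,2)] assms(3) by blast
  then show ?thesis using wdot_self_nonneg[OF assms(2)] by (metis order_le_neq_trans)
qed

lemma wdot_self_coordinate_bound:
  assumes "finite V" and "\<forall>x\<in>V. 0 < w x" and "x \<in> V"
  shows "\<bar>f x\<bar> \<le> sqrt (wdot V w f f / w x)"
proof (rule real_le_rsqrt)
  have "w x * f x * f x \<le> wdot V w f f"
    unfolding wdot_def using assms by (intro member_le_sum) (auto simp: mult.assoc less_imp_le)
  moreover have "0 < w x" using assms by blast
  ultimately show "\<bar>f x\<bar>\<^sup>2 \<le> wdot V w f f / w x"
    by (simp add: pos_le_divide_eq power2_eq_square ac_simps)
qed

lemma wdot_bessel: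
  assumes wpos: "\<forall>x\<in>V. 0 < w x" and "finite F"
    and pos: "\<forall>f\<in>F. 0 < wdot V w f f"
    and orth: "\<forall>f\<in>F. \<forall>f'\<in>F. f \<noteq> f' \<longrightarrow> wdot V w f f' = 0"
  shows "(\<Sum>f\<in>F. (wdot V w g f)\<^sup>2 / wdot V w f f) \<le> wdot V w g g"
proof -
  define a where "a f = wdot V w g f / wdot V w f f" for f
  define h where "h y = (\<Sum>f\<in>F. a f * f y)" for y
  define B where "B = (\<Sum>f\<in>F. (wdot V w g f)\<^sup>2 / wdot V w f f)"
  have gh: "wdot V w g h = B"
    unfolding h_def wdot_sum_right B_def a_def by (intro sum.cong) (auto simp: power2_eq_square)
  have "wdot V w h h = (\<Sum>f\<in>F. a f * wdot V w h f)"
    unfolding h_def[abs_def] by (rule wdot_sum_right)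
  also have "\<dots> = (\<Sum>f\<in>F. a f * (a f * wdot V w f f))"
  proof (intro sum.cong refl)
    fix f assume "f \<in> F"
    have "wdot V w h f = wdot V w f h" by (rule wdot_commute)
    also have "\<dots> = (\<Sum>f'\<in>F. a f' * wdot V w f f')"
      unfolding h_def[abs_def] by (rule wdot_sum_right)
    also have "\<dots> = (\<Sum>f'\<in>F. if f' = f then a f * wdot V w f f else 0)"
      using orth \<open>f \<in> F\<close> by (intro sum.cong) auto
    also have "\<dots> = a f * wdot V w f f" using \<open>finite F\<close> \<open>f \<in> F\<close> by (simp add: sum.delta')
    finally show "a f * wdot V w h f = a f * (a f * wdot V w f f)" by simp
  qed
  also have "\<dots> = B" unfolding B_def a_def using pos
    by (intro sum.cong refl) (simp add: power2_eq_square)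
  finally have hh: "wdot V w h h = B" .
  have "0 \<le> wdot V w (\<lambda>x. g x + (-1) * h x) (\<lambda>x. g x + (-1) * h x)"
    by (rule wdot_self_nonneg[OF wpos])
  also have "\<dots> = wdot V w g g - 2 * wdot V w g h + wdot V w h h"
    unfolding wdot_bilinear using wdot_commute[of V w h g] by simp
  finally show ?thesis using gh hh B_def by simp
qed

lemma wdot_orthogonal_card_le:
  assumes fin: "finite V" and wpos: "\<forall>x\<in>V. 0 < w x" and finF: "finite F"
    and pos: "\<forall>f\<in>F. 0 < wdot V w f f"
    and orth: "\<forall>f\<in>F. \<forall>f'\<in>F. f \<noteq> f' \<longrightarrow> wdot V w f f' = 0"
  shows "card F \<le> card V"
proof -
  define \<delta> where "\<delta> x = (\<lambda>y. if y = x then (1::real) else 0)" for x :: 'a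
  have wdot_\<delta>: "wdot V w (\<delta> x) f = w x * f x" if "x \<in> V" for x f
  proof -
    have "wdot V w (\<delta> x) f = (\<Sum>y\<in>V. if y = x then w x * f x else 0)"
      unfolding wdot_def \<delta>_def by (intro sum.cong) auto
    then show ?thesis using that fin by simp
  qed
  \<comment> \<open>Bessel's inequality for the coordinate vectors bounds each row sum by 1.\<close>
  have row: "(\<Sum>f\<in>F. w x * (f x)\<^sup>2 / wdot V w f f) \<le> 1" if "x \<in> V" for x
  proof -
    have "(\<Sum>f\<in>F. (w x * f x)\<^sup>2 / wdot V w f f) \<le> w x"
      using wdot_bessel[OF wpos finF pos orth, of "\<delta> x"] wdot_\<delta>[OF that]
      by (simp add: \<delta>_def)
    also have "(\<Sum>f\<in>F. (w x * f x)\<^sup>2 / wdot V w f f) = w x * (\<Sum>f\<in>F. w x * (f x)\<^sup>2 / wdot V w f f)"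
      by (simp add: sum_distrib_left power2_eq_square algebra_simps)
    finally show ?thesis using wpos that by simp
  qed
  have "real (card F) = (\<Sum>f\<in>F. 1)" by simp
  also have "\<dots> = (\<Sum>f\<in>F. wdot V w f f / wdot V w f f)" using pos by (intro sum.cong) auto
  also have "\<dots> = (\<Sum>f\<in>F. \<Sum>x\<in>V. w x * (f x)\<^sup>2 / wdot V w f f)"
    unfolding sum_divide_distrib[symmetric] by (simp only: wdot_def power2_eq_square mult.assoc)
  also have "\<dots> = (\<Sum>x\<in>V. \<Sum>f\<in>F. w x * (f x)\<^sup>2 / wdot V w f f)" by (rule sum.swap)
  also have "\<dots> \<le> (\<Sum>x\<in>V. 1)" by (intro sum_mono row)
  finally show ?thesis by simp
qed

section \<open>Reversible kernels and their spectra\<close>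

definition kernel_op :: "'a set \<Rightarrow> ('a \<Rightarrow> 'a \<Rightarrow> real) \<Rightarrow> ('a \<Rightarrow> real) \<Rightarrow> 'a \<Rightarrow> real" where
  "kernel_op V K f x = (\<Sum>y\<in>V. K x y * f y)"

definition kernel_comp :: "'a set \<Rightarrow> ('a \<Rightarrow> 'a \<Rightarrow> real) \<Rightarrow> ('a \<Rightarrow> 'a \<Rightarrow> real) \<Rightarrow> 'a \<Rightarrow> 'a \<Rightarrow> real" where
  "kernel_comp V K L x y = (\<Sum>z\<in>V. K x z * L z y)"

definition reversible :: "'a set \<Rightarrow> ('a \<Rightarrow> real) \<Rightarrow> ('a \<Rightarrow> 'a \<Rightarrow> real) \<Rightarrow> bool" where
  "reversible V w K \<longleftrightarrow> (\<forall>x\<in>V. \<forall>y\<in>V. w x * K x y = w y * K y x)"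

definition kernel_eigenvalue :: "'a set \<Rightarrow> ('a \<Rightarrow> 'a \<Rightarrow> real) \<Rightarrow> real \<Rightarrow> bool" where
  "kernel_eigenvalue V K c \<longleftrightarrow> (\<exists>f. (\<exists>x\<in>V. f x \<noteq> 0) \<and> (\<forall>x\<in>V. kernel_op V K f x = c * f x))"

lemma kernel_op_cong: "(\<And>y. y \<in> V \<Longrightarrow> f y = g y) \<Longrightarrow> kernel_op V K f x = kernel_op V K g x"
  unfolding kernel_op_def by (rule sum.cong) auto

lemma kernel_op_mult: "kernel_op V K (\<lambda>y. c * f y) = (\<lambda>x. c * kernel_op V K f x)"
  by (rule ext) (simp add: kernel_op_def sum_distrib_left ac_simps)

lemma kernel_op_add_mult:
  "kernel_op V K (\<lambda>y. f y + t * g y) = (\<lambda>x. kernel_op V K f x + t * kernel_op V K g x)"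
  by (rule ext) (simp add: kernel_op_def sum.distrib sum_distrib_left algebra_simps)

lemma kernel_op_comp: "kernel_op V (kernel_comp V K L) f = kernel_op V K (kernel_op V L f)"
proof (rule ext)
  fix x
  have "kernel_op V (kernel_comp V K L) f x = (\<Sum>y\<in>V. \<Sum>z\<in>V. K x z * L z y * f y)"
    unfolding kernel_op_def kernel_comp_def by (simp add: sum_distrib_right)
  also have "\<dots> = (\<Sum>z\<in>V. \<Sum>y\<in>V. K x z * L z y * f y)" by (rule sum.swap)
  also have "\<dots> = kernel_op V K (kernel_op V L f) x"
    unfolding kernel_op_def by (simp add: sum_distrib_left mult.assoc)
  finally show "kernel_op V (kernel_comp V K L) f x = kernel_op V K (kernel_op V L f) x" .
qed

lemma reversible_self_adjoint:
  assumes "reversible V w K"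
  shows "wdot V w (kernel_op V K f) g = wdot V w f (kernel_op V K g)"
proof -
  have "wdot V w (kernel_op V K f) g = (\<Sum>x\<in>V. \<Sum>y\<in>V. (w x * K x y) * f y * g x)"
    unfolding wdot_def kernel_op_def by (simp add: sum_distrib_left sum_distrib_right algebra_simps)
  also have "\<dots> = (\<Sum>x\<in>V. \<Sum>y\<in>V. (w y * K y x) * f y * g x)"
    using assms unfolding reversible_def by (intro sum.cong refl) auto
  also have "\<dots> = (\<Sum>y\<in>V. \<Sum>x\<in>V. (w y * K y x) * f y * g x)"
    by (rule sum.swap)
  also have "\<dots> = wdot V w f (kernel_op V K g)"
    unfolding wdot_def kernel_op_def by (simp add: sum_distrib_left sum_distrib_right algebra_simps)
  finally show ?thesis .
qed

lemma reversible_comp_self: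
  assumes "reversible V w K"
  shows "reversible V w (kernel_comp V K K)"
  unfolding reversible_def
proof (intro ballI)
  fix x y assume xy: "x \<in> V" "y \<in> V"
  have "w x * kernel_comp V K K x y = (\<Sum>z\<in>V. (w x * K x z) * K z y)"
    unfolding kernel_comp_def by (simp add: sum_distrib_left mult.assoc)
  also have "\<dots> = (\<Sum>z\<in>V. K z x * (w z * K z y))"
    using assms xy unfolding reversible_def by (intro sum.cong refl) (simp add: algebra_simps)
  also have "\<dots> = (\<Sum>z\<in>V. K z x * (w y * K y z))"
    using assms xy unfolding reversible_def by (intro sum.cong refl) simp
  also have "\<dots> = w y * kernel_comp V K K y x"
    unfolding kernel_comp_def by (simp add: sum_distrib_left algebra_simps)
  finally show "w x * kernel_comp V K K x y = w y * kernel_comp V K K y x" .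
qed

lemma reversible_eigenfunctions_orthogonal:
  assumes rev: "reversible V w K"
    and f: "\<forall>x\<in>V. kernel_op V K f x = a * f x" and g: "\<forall>x\<in>V. kernel_op V K g x = b * g x"
    and "a \<noteq> b"
  shows "wdot V w f g = 0"
proof -
  have "a * wdot V w f g = wdot V w (kernel_op V K f) g"
    using f by (simp add: wdot_scale_left[symmetric] cong: wdot_cong)
  also have "\<dots> = wdot V w f (kernel_op V K g)" by (rule reversible_self_adjoint[OF rev])
  also have "\<dots> = b * wdot V w f g"
    using g by (simp add: wdot_scale_right[symmetric] cong: wdot_cong)
  finally show ?thesis using \<open>a \<noteq> b\<close> by simp
qed

lemma reversible_finite_eigenvalues:
  assumes fin: "finite V" and wpos: "\<forall>x\<in>V. 0 < w x" and rev: "reversible V w K"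
  shows "finite {c. kernel_eigenvalue V K c}"
proof (rule ccontr)
  define M where "M = {c. kernel_eigenvalue V K c}"
  define is_eigenfun where
    "is_eigenfun c f \<longleftrightarrow> (\<exists>x\<in>V. f x \<noteq> 0) \<and> (\<forall>x\<in>V. kernel_op V K f x = c * f x)" for c f
  define eigenfun where "eigenfun c = (SOME f. is_eigenfun c f)" for c
  assume "infinite {c. kernel_eigenvalue V K c}"
  then obtain C where C: "finite C" "card C = card V + 1" "C \<subseteq> M"
    using infinite_arbitrarily_large unfolding M_def by blast
  have eigenfun: "is_eigenfun c (eigenfun c)" if "c \<in> M" for c
    using that someI_ex[of "is_eigenfun c"]
    unfolding M_def eigenfun_def is_eigenfun_def kernel_eigenvalue_def by blast
  have "inj_on eigenfun C"
  proof (rule inj_onI)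
    fix c d assume "c \<in> C" "d \<in> C" and eq: "eigenfun c = eigenfun d"
    then obtain x where x: "x \<in> V" "eigenfun c x \<noteq> 0"
      using eigenfun C(3) unfolding is_eigenfun_def by blast
    have "c * eigenfun c x = d * eigenfun c x"
      using eigenfun \<open>c \<in> C\<close> \<open>d \<in> C\<close> C(3) x(1) eq unfolding is_eigenfun_def by (metis subsetD)
    then show "c = d" using x(2) by simp
  qed
  then have "card (eigenfun ` C) = card V + 1" using C(2) by (simp add: card_image)
  moreover have "card (eigenfun ` C) \<le> card V"
  proof (rule wdot_orthogonal_card_le[OF fin wpos])
    show "finite (eigenfun ` C)" using C(1) by simp
    show "\<forall>f\<in>eigenfun ` C. 0 < wdot V w f f"
      using eigenfun C(3) wdot_self_pos[OF fin wpos] unfolding is_eigenfun_def by blast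
    show "\<forall>f\<in>eigenfun ` C. \<forall>f'\<in>eigenfun ` C. f \<noteq> f' \<longrightarrow> wdot V w f f' = 0"
      using eigenfun C(3) reversible_eigenfunctions_orthogonal[OF rev]
      unfolding is_eigenfun_def by blast
  qed
  ultimately show False by simp
qed

lemma kernel_form_min_on_sphere:
  assumes fin: "finite V" and ne: "V \<noteq> {}" and wpos: "\<forall>x\<in>V. 0 < w x"
  shows "\<exists>h. wdot V w h h = 1 \<and>
    (\<forall>g. wdot V w g g = 1 \<longrightarrow> wdot V w (kernel_op V K h) h \<le> wdot V w (kernel_op V K g) g)"
proof -
  define F where "F f = wdot V w (kernel_op V K f) f" for f
  define N where "N f = wdot V w f f" for f
  define X where "X = product_topology (\<lambda>_::'a. euclideanreal) V"
  define box where "box = PiE V (\<lambda>x. {- sqrt (1 / w x) .. sqrt (1 / w x)})"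
  define S where "S = {f \<in> box. N f = 1}"
  have contF: "continuous_map X euclideanreal F"
    unfolding F_def wdot_def kernel_op_def X_def using fin
    by (intro continuous_intros continuous_map_sum continuous_map_real_mult
        continuous_map_product_projection) auto
  have contN: "continuous_map X euclideanreal N"
    unfolding N_def wdot_def X_def using fin
    by (intro continuous_intros continuous_map_sum continuous_map_real_mult
        continuous_map_product_projection) auto
  have "compactin X S"
  proof (rule closed_compactin)
    show "compactin X box" unfolding X_def box_def by (simp add: compactin_PiE)
    show "S \<subseteq> box" unfolding S_def by blast
    have "closedin X box" unfolding X_def box_def by (simp add: closedin_product_topology)
    moreover have "closedin X {f \<in> topspace X. N f \<in> {1}}"
      by (rule closedin_continuous_map_preimage[OF contN]) simp
    moreover have "S = box \<inter> {f \<in> topspace X. N f \<in> {1}}"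
      unfolding S_def X_def box_def by auto
    ultimately show "closedin X S" by (simp add: closedin_Int)
  qed
  have sphere: "restrict g V \<in> S" if "N g = 1" for g
  proof -
    have "N (restrict g V) = N g" unfolding N_def by (rule wdot_cong) auto
    moreover have "g x \<in> {- sqrt (1 / w x) .. sqrt (1 / w x)}" if "x \<in> V" for x
      using wdot_self_coordinate_bound[OF fin wpos that, of g] \<open>N g = 1\<close>
      unfolding N_def by auto
    ultimately show ?thesis using that unfolding S_def box_def by auto
  qed
  obtain x0 where x0: "x0 \<in> V" using ne by blast
  have "0 < w x0" using wpos x0 by blast
  define c where "c = sqrt (1 / w x0)"
  have c2: "c * c = 1 / w x0" unfolding c_def using \<open>0 < w x0\<close> by simp
  define e where "e x = (if x = x0 then c else 0)" for x
  have "N e = (\<Sum>x\<in>V. if x = x0 then w x0 * c * c else 0)"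
    unfolding N_def wdot_def e_def by (intro sum.cong) auto
  also have "\<dots> = 1" using fin x0 c2 \<open>0 < w x0\<close> by (simp add: mult.assoc)
  finally have "S \<noteq> {}" using sphere by blast
  have "compact (F ` S)" using image_compactin[OF \<open>compactin X S\<close> contF] by simp
  then obtain m where "m \<in> F ` S" "\<forall>y\<in>F ` S. m \<le> y"
    using compact_attains_inf[of "F ` S"] \<open>S \<noteq> {}\<close> by blast
  then obtain h where "h \<in> S" and hmin: "\<forall>g\<in>S. F h \<le> F g" by blast
  have "F h \<le> F g" if "N g = 1" for g
  proof -
    have "F (restrict g V) = F g" unfolding F_def by (intro wdot_cong kernel_op_cong) auto
    then show ?thesis using hmin sphere[OF that] by metis
  qed
  moreover have "N h = 1" using \<open>h \<in> S\<close> unfolding S_def by simp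
  ultimately show ?thesis unfolding F_def N_def by blast
qed

lemma kernel_form_min_attained:
  assumes fin: "finite V" and ne: "V \<noteq> {}" and wpos: "\<forall>x\<in>V. 0 < w x"
  shows "\<exists>h. wdot V w h h = 1 \<and>
    (\<forall>f. wdot V w (kernel_op V K h) h * wdot V w f f \<le> wdot V w (kernel_op V K f) f)"
proof -
  define F where "F f = wdot V w (kernel_op V K f) f" for f
  define N where "N f = wdot V w f f" for f
  obtain h where "N h = 1" and hmin: "\<forall>g. N g = 1 \<longrightarrow> F h \<le> F g"
    using kernel_form_min_on_sphere[OF fin ne wpos, of K] unfolding F_def N_def by blast
  have "F h * N f \<le> F f" for f
  proof (cases "\<forall>x\<in>V. f x = 0")
    case True
    then have "N f = 0" "F f = 0" unfolding N_def F_def wdot_def by simp_all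
    then show ?thesis by simp
  next
    case False
    then have "0 < N f" unfolding N_def using wdot_self_pos[OF fin wpos] by blast
    define r where "r = 1 / sqrt (N f)"
    have r2: "r\<^sup>2 * N f = 1" unfolding r_def using \<open>0 < N f\<close> by (simp add: power_divide)
    have "N (\<lambda>x. r * f x) = r\<^sup>2 * N f"
      unfolding N_def wdot_scale_left wdot_scale_right by (simp add: power2_eq_square)
    moreover have "F (\<lambda>x. r * f x) = r\<^sup>2 * F f"
      unfolding F_def kernel_op_mult wdot_scale_left wdot_scale_right by (simp add: power2_eq_square)
    ultimately have "F h \<le> r\<^sup>2 * F f" using hmin r2 by metis
    then have "F h * N f \<le> F f * (r\<^sup>2 * N f)"
      using \<open>0 < N f\<close> by (simp add: mult_right_mono algebra_simps)
    then show ?thesis using r2 by simp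
  qed
  then show ?thesis using \<open>N h = 1\<close> unfolding F_def N_def by blast
qed

lemma quadratic_nonneg_linear_coeff_zero:
  fixes a b :: real
  assumes "\<forall>t. 0 \<le> 2 * t * a + t\<^sup>2 * b"
  shows "a = 0"
proof (rule ccontr)
  assume "a \<noteq> 0"
  define s where "s = 1 / (\<bar>b\<bar> + 1)"
  have "0 < s" unfolding s_def by (simp add: add_nonneg_pos)
  have "s * b \<le> s * \<bar>b\<bar>" using \<open>0 < s\<close> by (simp add: mult_left_mono)
  also have "s * \<bar>b\<bar> < 1" unfolding s_def by simp
  finally have "s * b < 2" by simp
  have "2 * (- s * a) * a + (- s * a)\<^sup>2 * b = (a\<^sup>2 * s) * (s * b - 2)"
    by (simp add: power2_eq_square algebra_simps)
  also have "\<dots> < 0" using \<open>a \<noteq> 0\<close> \<open>0 < s\<close> \<open>s * b < 2\<close> by (intro mult_pos_neg) auto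
  finally show False using assms by (metis not_le)
qed

lemma reversible_form_minimizer_eigen:
  assumes fin: "finite V" and wpos: "\<forall>x\<in>V. 0 < w x" and rev: "reversible V w K"
    and lower: "\<forall>f. c * wdot V w f f \<le> wdot V w (kernel_op V K f) f"
    and attained: "wdot V w (kernel_op V K h) h = c * wdot V w h h"
  shows "\<forall>x\<in>V. kernel_op V K h x = c * h x"
proof -
  define Q where "Q f = wdot V w (kernel_op V K f) f - c * wdot V w f f" for f
  define B where "B f = wdot V w (kernel_op V K h) f - c * wdot V w h f" for f
  \<comment> \<open>h minimises the nonnegative form Q, so the first variation B of Q at h vanishes.\<close>
  have B0: "B f = 0" for f
  proof (rule quadratic_nonneg_linear_coeff_zero, intro allI)
    fix t
    have "Q (\<lambda>x. h x + t * f x) = Q h + 2 * t * B f + t\<^sup>2 * Q f"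
      unfolding Q_def B_def kernel_op_add_mult wdot_bilinear
      using reversible_self_adjoint[OF rev, of f h] wdot_commute[of V w f "kernel_op V K h"]
        wdot_commute[of V w f h]
      by (simp add: algebra_simps)
    moreover have "Q h = 0" using attained unfolding Q_def by simp
    moreover have "0 \<le> Q (\<lambda>x. h x + t * f x)" using lower unfolding Q_def by simp
    ultimately show "0 \<le> 2 * t * B f + t\<^sup>2 * Q f" by simp
  qed
  define d where "d x = kernel_op V K h x + (- c) * h x" for x
  have "wdot V w d d = B d" unfolding d_def[abs_def] B_def wdot_add_mult_left by simp
  then have "wdot V w d d = 0" using B0 by simp
  then show ?thesis using wdot_self_eq_0_iff[OF fin wpos] unfolding d_def by simp
qed

lemma reversible_min_eigenvalue:
  assumes fin: "finite V" and ne: "V \<noteq> {}" and wpos: "\<forall>x\<in>V. 0 < w x"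
    and rev: "reversible V w K"
  shows "\<exists>c. kernel_eigenvalue V K c \<and> (\<forall>f. c * wdot V w f f \<le> wdot V w (kernel_op V K f) f)"
proof -
  obtain h where h1: "wdot V w h h = 1"
    and hmin: "\<forall>f. wdot V w (kernel_op V K h) h * wdot V w f f \<le> wdot V w (kernel_op V K f) f"
    using kernel_form_min_attained[OF fin ne wpos] by blast
  define c where "c = wdot V w (kernel_op V K h) h"
  have "\<forall>x\<in>V. kernel_op V K h x = c * h x"
    by (rule reversible_form_minimizer_eigen[OF fin wpos rev]) (use hmin h1 c_def in simp_all)
  moreover have "\<exists>x\<in>V. h x \<noteq> 0" using h1 wdot_self_eq_0_iff[OF fin wpos, of h] by auto
  ultimately show ?thesis using hmin unfolding kernel_eigenvalue_def c_def by blast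
qed

lemma reversible_comp_self_eigenvalue:
  assumes fin: "finite V" and wpos: "\<forall>x\<in>V. 0 < w x" and rev: "reversible V w K"
    and "kernel_eigenvalue V (kernel_comp V K K) c"
  shows "\<exists>l. kernel_eigenvalue V K l \<and> l\<^sup>2 = c"
proof -
  obtain k where nz: "\<exists>x\<in>V. k x \<noteq> 0"
    and ev: "\<forall>x\<in>V. kernel_op V K (kernel_op V K k) x = c * k x"
    using assms(4) unfolding kernel_eigenvalue_def kernel_op_comp by blast
  have "c * wdot V w k k = wdot V w (kernel_op V K (kernel_op V K k)) k"
    using ev by (simp add: wdot_scale_left[symmetric] cong: wdot_cong)
  also have "\<dots> = wdot V w (kernel_op V K k) (kernel_op V K k)"
    using reversible_self_adjoint[OF rev] wdot_commute by metis
  finally have "0 \<le> c * wdot V w k k" using wdot_self_nonneg[OF wpos] by metis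
  then have "0 \<le> c" using wdot_self_pos[OF fin wpos nz] by (simp add: zero_le_mult_iff)
  define r where "r = sqrt c"
  have r: "c = r * r" "0 \<le> r" unfolding r_def using \<open>0 \<le> c\<close> by simp_all
  \<comment> \<open>K^2 - c factors as (K - r)(K + r).\<close>
  define g where "g x = kernel_op V K k x + r * k x" for x
  have "\<forall>x\<in>V. kernel_op V K g x = r * g x"
    unfolding g_def[abs_def] kernel_op_add_mult using ev r by (simp add: algebra_simps)
  show ?thesis
  proof (cases "\<exists>x\<in>V. g x \<noteq> 0")
    case True
    then have "kernel_eigenvalue V K r"
      using \<open>\<forall>x\<in>V. kernel_op V K g x = r * g x\<close> unfolding kernel_eigenvalue_def by blast
    then show ?thesis using r by (auto simp: power2_eq_square)
  next
    case False
    then have "\<forall>x\<in>V. kernel_op V K k x = (- r) * k x" unfolding g_def by (simp add: add_eq_0_iff)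
    then have "kernel_eigenvalue V K (- r)" using nz unfolding kernel_eigenvalue_def by blast
    then show ?thesis using r by (auto simp: power2_eq_square)
  qed
qed

lemma reversible_norm_lower_bound:
  assumes fin: "finite V" and ne: "V \<noteq> {}" and wpos: "\<forall>x\<in>V. 0 < w x"
    and rev: "reversible V w K" and "0 \<le> r"
    and gap: "\<forall>l. kernel_eigenvalue V K l \<longrightarrow> r \<le> \<bar>l\<bar>"
  shows "r\<^sup>2 * wdot V w f f \<le> wdot V w (kernel_op V K f) (kernel_op V K f)"
proof -
  obtain c where c: "kernel_eigenvalue V (kernel_comp V K K) c"
    and cmin: "\<forall>f. c * wdot V w f f \<le> wdot V w (kernel_op V (kernel_comp V K K) f) f"
    using reversible_min_eigenvalue[OF fin ne wpos reversible_comp_self[OF rev]] by blast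
  obtain l where "kernel_eigenvalue V K l" "l\<^sup>2 = c"
    using reversible_comp_self_eigenvalue[OF fin wpos rev c] by blast
  then have "r\<^sup>2 \<le> c" using gap \<open>0 \<le> r\<close> by (metis power2_abs power_mono)
  then have "r\<^sup>2 * wdot V w f f \<le> c * wdot V w f f"
    by (intro mult_right_mono wdot_self_nonneg[OF wpos])
  also have "\<dots> \<le> wdot V w (kernel_op V K (kernel_op V K f)) f"
    using cmin unfolding kernel_op_comp by blast
  also have "\<dots> = wdot V w (kernel_op V K f) (kernel_op V K f)"
    by (rule reversible_self_adjoint[OF rev])
  finally show ?thesis .
qed

lemma reversible_norm_upper_bound:
  assumes rev: "reversible V w K" and "c < 1"
    and contr: "\<forall>f. wdot V w (kernel_op V K f) (kernel_op V K f) \<le> wdot V w f f"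
    and lower: "\<forall>f. c * wdot V w f f \<le> wdot V w (kernel_op V K f) (kernel_op V K f)"
  shows "wdot V w (kernel_op V K (kernel_op V K g)) (kernel_op V K (kernel_op V K g))
    \<le> (1 + c) * wdot V w (kernel_op V K g) (kernel_op V K g) - c * wdot V w g g"
proof -
  define u1 where "u1 = kernel_op V K g"
  define u2 where "u2 = kernel_op V K u1"
  define u3 where "u3 = kernel_op V K u2"
  have Ku: "kernel_op V K g = u1" "kernel_op V K u1 = u2" "kernel_op V K u2 = u3"
    unfolding u1_def u2_def u3_def by simp_all
  have u13: "wdot V w u1 u3 = wdot V w u2 u2"
    using reversible_self_adjoint[OF rev, of u1 u2] unfolding Ku by simp
  \<comment> \<open>On an eigenvalue y of K^2 in [c, 1] this is the identity
      (1 - c)(y - c)(1 - y) = (y - c)^2 (1 - y) + (1 - y)^2 (y - c).\<close>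
  have h1: "wdot V w (\<lambda>x. u3 x + (- c) * u1 x) (\<lambda>x. u3 x + (- c) * u1 x)
      \<le> wdot V w (\<lambda>x. u2 x + (- c) * g x) (\<lambda>x. u2 x + (- c) * g x)"
    using contr[rule_format, of "\<lambda>x. u2 x + (- c) * g x"] unfolding kernel_op_add_mult Ku by simp
  have h2: "c * wdot V w (\<lambda>x. g x + (- 1) * u2 x) (\<lambda>x. g x + (- 1) * u2 x)
      \<le> wdot V w (\<lambda>x. u1 x + (- 1) * u3 x) (\<lambda>x. u1 x + (- 1) * u3 x)"
    using lower[rule_format, of "\<lambda>x. g x + (- 1) * u2 x"] unfolding kernel_op_add_mult Ku by simp
  have "(1 - c) * ((1 + c) * wdot V w u1 u1 - wdot V w u2 u2 - c * wdot V w g g)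
      = (wdot V w (\<lambda>x. u2 x + (- c) * g x) (\<lambda>x. u2 x + (- c) * g x)
         - wdot V w (\<lambda>x. u3 x + (- c) * u1 x) (\<lambda>x. u3 x + (- c) * u1 x))
      + (wdot V w (\<lambda>x. u1 x + (- 1) * u3 x) (\<lambda>x. u1 x + (- 1) * u3 x)
         - c * wdot V w (\<lambda>x. g x + (- 1) * u2 x) (\<lambda>x. g x + (- 1) * u2 x))"
    unfolding wdot_bilinear using u13 wdot_commute[of V w u3 u1] wdot_commute[of V w g u2]
    by (simp add: algebra_simps power2_eq_square)
  then have "0 \<le> (1 - c) * ((1 + c) * wdot V w u1 u1 - wdot V w u2 u2 - c * wdot V w g g)"
    using h1 h2 by linarith
  then show ?thesis using \<open>c < 1\<close> unfolding Ku by (simp add: zero_le_mult_iff)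
qed

section \<open>The averaging operator of a graph\<close>

lemma degree_pair_inequality:
  fixes p q :: nat
  assumes "3 \<le> p" and "3 \<le> q"
  shows "5 / 2 * ((1 / real p + 1 / real q) / 2) - 1 / 2
    < 2 * ((1 / real p + 1 / real q) / 2)\<^sup>2 + (real p + real q) / (4 * (max (real p) (real q))\<^sup>2)"
proof -
  define s where "s = (1 / real p + 1 / real q) / 2"
  have pos: "0 < (real p + real q) / (4 * (max (real p) (real q))\<^sup>2)" using assms by simp
  show ?thesis
  proof (cases "s \<le> 1 / 4")
    case True
    have "2 * s\<^sup>2 - 5 / 2 * s + 1 / 2 = 2 * (1 / 4 - s) * (1 - s)"
      by (simp add: field_simps power2_eq_square)
    also have "\<dots> \<ge> 0" using True by (intro mult_nonneg_nonneg) auto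
    finally show ?thesis using pos unfolding s_def[symmetric] by simp
  next
    case False
    \<comment> \<open>s > 1/4 leaves only finitely many degree pairs, which are checked one by one.\<close>
    have "p < 6 \<and> q < 6 \<and> (p = 3 \<or> q = 3)"
    proof (rule ccontr)
      assume "\<not> ?thesis"
      then have "(4 \<le> p \<and> 4 \<le> q) \<or> 6 \<le> p \<or> 6 \<le> q" using assms by auto
      moreover have "1 / real p \<le> 1 / 3" "1 / real q \<le> 1 / 3" using assms by (auto simp: field_simps)
      ultimately have "1 / real p + 1 / real q \<le> 1 / 2"
      proof (elim disjE conjE)
        assume "4 \<le> p" "4 \<le> q"
        then have "1 / real p \<le> 1 / 4" "1 / real q \<le> 1 / 4" by (auto simp: field_simps)
        then show ?thesis by simp
      next
        assume "6 \<le> p"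
        then have "1 / real p \<le> 1 / 6" by (auto simp: field_simps)
        then show ?thesis using \<open>1 / real q \<le> 1 / 3\<close> by simp
      next
        assume "6 \<le> q"
        then have "1 / real q \<le> 1 / 6" by (auto simp: field_simps)
        then show ?thesis using \<open>1 / real p \<le> 1 / 3\<close> by simp
      qed
      then show False using False unfolding s_def by simp
    qed
    then have "p \<in> {3, 4, 5} \<and> q \<in> {3, 4, 5}" using assms by auto
    then show ?thesis by (auto simp: power2_eq_square max_def)
  qed
qed

lemma indicator_diff_sq_le:
  fixes p q M :: real
  assumes "0 < p" and "0 < q" and "p \<le> M" and "q \<le> M"
  shows "(of_bool A - of_bool B)\<^sup>2 / M\<^sup>2 \<le> (of_bool A / p + of_bool B / q)\<^sup>2"
proof -
  have "1 / M\<^sup>2 \<le> 1 / p\<^sup>2" "1 / M\<^sup>2 \<le> 1 / q\<^sup>2"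
    using assms by (auto intro!: frac_le power_mono)
  then show ?thesis by (cases A; cases B) (auto simp: power_divide)
qed

definition avg_kernel :: "'a set \<Rightarrow> ('a \<Rightarrow> 'a \<Rightarrow> bool) \<Rightarrow> 'a \<Rightarrow> 'a \<Rightarrow> real" where
  "avg_kernel V E x y = (if E x y then 1 / real (deg V E x) else 0)"

locale graph_no_isolated =
  fixes V :: "'a set" and E :: "'a \<Rightarrow> 'a \<Rightarrow> bool"
  assumes simple: "simple_graph V E" and deg_pos: "\<forall>v\<in>V. 0 < deg V E v"
begin

abbreviation deg_weight :: "'a \<Rightarrow> real" where "deg_weight \<equiv> \<lambda>x. real (deg V E x)"

abbreviation avg :: "('a \<Rightarrow> real) \<Rightarrow> 'a \<Rightarrow> real" where "avg \<equiv> kernel_op V (avg_kernel V E)"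

abbreviation sqnorm :: "('a \<Rightarrow> real) \<Rightarrow> real" where "sqnorm f \<equiv> wdot V deg_weight f f"

lemma finite_V: "finite V"
  using simple unfolding simple_graph_def by blast

lemma edge_sym: "E x y \<Longrightarrow> E y x"
  using simple unfolding simple_graph_def by blast

lemma nbhd_subset: "nbhd V E x \<subseteq> V"
  unfolding nbhd_def by blast

lemma finite_nbhd: "finite (nbhd V E x)"
  using finite_V nbhd_subset by (rule finite_subset[rotated])

lemma deg_weight_pos: "\<forall>x\<in>V. 0 < deg_weight x"
  using deg_pos by simp

lemma avg_eq: "avg f x = (\<Sum>y\<in>nbhd V E x. f y) / real (deg V E x)"
proof -
  have "avg f x = (\<Sum>y\<in>V. if E x y then f y / real (deg V E x) else 0)"
    unfolding kernel_op_def avg_kernel_def by (intro sum.cong) auto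
  also have "\<dots> = (\<Sum>y\<in>nbhd V E x. f y / real (deg V E x))"
    using finite_V unfolding nbhd_def by (simp add: sum.inter_filter)
  finally show ?thesis by (simp add: sum_divide_distrib)
qed

lemma reversible_avg_kernel: "reversible V deg_weight (avg_kernel V E)"
  using deg_pos edge_sym unfolding reversible_def avg_kernel_def by auto

lemma laplacian_eigenvalue_iff:
  "laplacian_eigenvalue V E mu \<longleftrightarrow> kernel_eigenvalue V (avg_kernel V E) (1 - mu)"
  unfolding laplacian_eigenvalue_def kernel_eigenvalue_def norm_laplacian_def avg_eq[symmetric]
  by (auto simp: algebra_simps)

lemma eps_gap_le:
  assumes "laplacian_eigenvalue V E mu"
  shows "eps_gap V E \<le> \<bar>1 - mu\<bar>"
proof -
  have "{mu. laplacian_eigenvalue V E mu}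
      = (\<lambda>mu. 1 - mu) -` {l. kernel_eigenvalue V (avg_kernel V E) l}"
    by (auto simp: laplacian_eigenvalue_iff)
  moreover have "inj (\<lambda>mu::real. 1 - mu)" by (rule injI) simp
  ultimately have "finite {mu. laplacian_eigenvalue V E mu}"
    using reversible_finite_eigenvalues[OF finite_V deg_weight_pos reversible_avg_kernel]
    by (metis finite_vimageI)
  then show ?thesis unfolding eps_gap_def using assms by (intro Min_le) auto
qed

lemma deg_as_sum: "(\<Sum>x\<in>V. if E x y then 1 else 0) = real (deg V E y)"
proof -
  have "(\<Sum>x\<in>V. if E x y then (1::real) else 0) = (\<Sum>x\<in>V. if E y x then 1 else 0)"
    using edge_sym by (intro sum.cong) auto
  also have "\<dots> = real (card {x\<in>V. E y x})" using finite_V by (simp add: sum.inter_filter[symmetric])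
  finally show ?thesis unfolding deg_def nbhd_def .
qed

lemma sqnorm_avg: "sqnorm (avg f) = (\<Sum>x\<in>V. (\<Sum>y\<in>nbhd V E x. f y)\<^sup>2 / real (deg V E x))"
  unfolding wdot_def avg_eq
proof (intro sum.cong refl)
  fix x assume "x \<in> V"
  then have "real (deg V E x) \<noteq> 0" using deg_pos by simp
  then show "real (deg V E x) * ((\<Sum>y\<in>nbhd V E x. f y) / real (deg V E x))
      * ((\<Sum>y\<in>nbhd V E x. f y) / real (deg V E x))
    = (\<Sum>y\<in>nbhd V E x. f y)\<^sup>2 / real (deg V E x)"
    by (simp add: power2_eq_square field_simps)
qed

lemma avg_contraction: "sqnorm (avg f) \<le> sqnorm f"
proof -
  have "sqnorm (avg f) \<le> (\<Sum>x\<in>V. \<Sum>y\<in>nbhd V E x. (f y)\<^sup>2)"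
    unfolding sqnorm_avg
  proof (rule sum_mono)
    fix x assume "x \<in> V"
    then have "0 < real (card (nbhd V E x))" using deg_pos unfolding deg_def by simp
    then show "(\<Sum>y\<in>nbhd V E x. f y)\<^sup>2 / real (deg V E x) \<le> (\<Sum>y\<in>nbhd V E x. (f y)\<^sup>2)"
      using sum_squared_le_sum_of_squares[of f "nbhd V E x"] unfolding deg_def
      by (simp add: pos_divide_le_eq)
  qed
  also have "\<dots> = (\<Sum>x\<in>V. \<Sum>y\<in>V. if E x y then (f y)\<^sup>2 else 0)"
    using finite_V unfolding nbhd_def by (simp add: sum.inter_filter)
  also have "\<dots> = (\<Sum>y\<in>V. \<Sum>x\<in>V. if E x y then (f y)\<^sup>2 else 0)" by (rule sum.swap)
  also have "\<dots> = (\<Sum>y\<in>V. (f y)\<^sup>2 * (\<Sum>x\<in>V. if E x y then 1 else 0))"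
    by (simp add: sum_distrib_left if_distrib cong: if_cong)
  also have "\<dots> = sqnorm f"
    unfolding wdot_def deg_as_sum by (simp add: power2_eq_square algebra_simps)
  finally show ?thesis .
qed

lemma sum_nbhd_indicator:
  assumes "u \<in> V"
  shows "(\<Sum>y\<in>nbhd V E x. of_bool (y = u)) = (of_bool (E x u) :: real)"
  using assms finite_nbhd unfolding nbhd_def by (simp add: of_bool_def)

lemma sqnorm_indicator:
  assumes "u \<in> V"
  shows "sqnorm (\<lambda>y. of_bool (y = u)) = real (deg V E u)"
proof -
  have "sqnorm (\<lambda>y. of_bool (y = u)) = (\<Sum>x\<in>V. if x = u then real (deg V E u) else 0)"
    unfolding wdot_def by (intro sum.cong) auto
  then show ?thesis using assms finite_V by simp
qed

lemma sqnorm_avg_indicator: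
  assumes "u \<in> V"
  shows "sqnorm (avg (\<lambda>y. of_bool (y = u))) = (\<Sum>x\<in>nbhd V E u. 1 / real (deg V E x))"
proof -
  have "sqnorm (avg (\<lambda>y. of_bool (y = u))) = (\<Sum>x\<in>V. if E u x then 1 / real (deg V E x) else 0)"
    unfolding sqnorm_avg sum_nbhd_indicator[OF assms] using edge_sym
    by (intro sum.cong) auto
  also have "\<dots> = (\<Sum>x\<in>nbhd V E u. 1 / real (deg V E x))"
    using finite_V unfolding nbhd_def by (simp add: sum.inter_filter)
  finally show ?thesis .
qed

lemma sqnorm_indicator_diff:
  assumes "a \<in> V" and "b \<in> V" and "a \<noteq> b"
  shows "sqnorm (\<lambda>y. of_bool (y = a) - of_bool (y = b)) = real (deg V E a) + real (deg V E b)"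
proof -
  have "sqnorm (\<lambda>y. of_bool (y = a) - of_bool (y = b))
      = (\<Sum>x\<in>V. (if x = a then real (deg V E a) else 0) + (if x = b then real (deg V E b) else 0))"
    unfolding wdot_def using assms(3) by (intro sum.cong) auto
  also have "\<dots> = real (deg V E a) + real (deg V E b)"
    using assms(1,2) finite_V by (simp add: sum.distrib)
  finally show ?thesis .
qed

lemma sqnorm_avg_indicator_diff:
  assumes "a \<in> V" and "b \<in> V"
  shows "sqnorm (avg (\<lambda>y. of_bool (y = a) - of_bool (y = b)))
    = (\<Sum>x\<in>V. (of_bool (E x a) - of_bool (E x b))\<^sup>2 / real (deg V E x))"
  unfolding sqnorm_avg
  by (simp add: sum_subtractf sum_nbhd_indicator[OF assms(1)] sum_nbhd_indicator[OF assms(2)])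

lemma sqnorm_avg_avg_indicator_lower:
  assumes "v \<in> V" and nb: "nbhd V E v = {a, b}" and "a \<noteq> b"
  defines "s \<equiv> (1 / real (deg V E a) + 1 / real (deg V E b)) / 2"
    and "M \<equiv> max (real (deg V E a)) (real (deg V E b))"
  shows "2 * s\<^sup>2 + sqnorm (avg (\<lambda>y. of_bool (y = a) - of_bool (y = b))) / M\<^sup>2
    \<le> sqnorm (avg (avg (\<lambda>y. of_bool (y = v))))"
proof -
  define da where "da = real (deg V E a)"
  define db where "db = real (deg V E b)"
  define ia where "ia x = (of_bool (E x a) :: real)" for x
  define ib where "ib x = (of_bool (E x b) :: real)" for x
  have aV: "a \<in> V" and bV: "b \<in> V" using nb nbhd_subset by auto
  have "E v a" "E v b" using nb unfolding nbhd_def by auto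
  have "deg V E v = 2" using nb \<open>a \<noteq> b\<close> unfolding deg_def by simp
  have "0 < da" "0 < db" unfolding da_def db_def using deg_pos aV bV by auto
  have avg_v: "avg (\<lambda>y. of_bool (y = v)) y = of_bool (y = a) / da + of_bool (y = b) / db"
    if "y \<in> V" for y
  proof -
    have "E y v \<longleftrightarrow> y = a \<or> y = b" using nb that edge_sym unfolding nbhd_def by blast
    then show ?thesis
      unfolding avg_eq sum_nbhd_indicator[OF \<open>v \<in> V\<close>] da_def db_def using \<open>a \<noteq> b\<close> by auto
  qed
  have sum_avg_v: "(\<Sum>y\<in>nbhd V E x. avg (\<lambda>y. of_bool (y = v)) y) = ia x / da + ib x / db" for x
  proof -
    have "(\<Sum>y\<in>nbhd V E x. avg (\<lambda>y. of_bool (y = v)) y)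
        = (\<Sum>y\<in>nbhd V E x. of_bool (y = a) / da + of_bool (y = b) / db)"
      using nbhd_subset by (intro sum.cong refl avg_v) blast
    then show ?thesis unfolding ia_def ib_def
      by (simp add: sum.distrib sum_nbhd_indicator[OF aV] sum_nbhd_indicator[OF bV]
          flip: sum_divide_distrib)
  qed
  have pointwise: "(if x = v then 2 * s\<^sup>2 else 0) + (ia x - ib x)\<^sup>2 / real (deg V E x) / M\<^sup>2
      \<le> (ia x / da + ib x / db)\<^sup>2 / real (deg V E x)" if "x \<in> V" for x
  proof (cases "x = v")
    case True
    then have "ia x = 1" "ib x = 1" using \<open>E v a\<close> \<open>E v b\<close> unfolding ia_def ib_def by auto
    then show ?thesis using True \<open>deg V E v = 2\<close> unfolding s_def da_def db_def
      by (simp add: power2_eq_square field_simps)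
  next
    case False
    have "(ia x - ib x)\<^sup>2 / M\<^sup>2 \<le> (ia x / da + ib x / db)\<^sup>2"
      unfolding ia_def ib_def M_def using \<open>0 < da\<close> \<open>0 < db\<close>
      by (intro indicator_diff_sq_le) (auto simp: da_def db_def)
    then have "(ia x - ib x)\<^sup>2 / M\<^sup>2 / real (deg V E x) \<le> (ia x / da + ib x / db)\<^sup>2 / real (deg V E x)"
      by (rule divide_right_mono) simp
    then show ?thesis using False by (simp add: divide_divide_eq_left mult.commute)
  qed
  have "2 * s\<^sup>2 + sqnorm (avg (\<lambda>y. of_bool (y = a) - of_bool (y = b))) / M\<^sup>2
      = (\<Sum>x\<in>V. (if x = v then 2 * s\<^sup>2 else 0) + (ia x - ib x)\<^sup>2 / real (deg V E x) / M\<^sup>2)"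
    unfolding sqnorm_avg_indicator_diff[OF aV bV] ia_def ib_def using \<open>v \<in> V\<close> finite_V
    by (simp add: sum.distrib sum_divide_distrib)
  also have "\<dots> \<le> (\<Sum>x\<in>V. (ia x / da + ib x / db)\<^sup>2 / real (deg V E x))"
    by (intro sum_mono pointwise)
  also have "\<dots> = sqnorm (avg (avg (\<lambda>y. of_bool (y = v))))"
    unfolding sqnorm_avg[of "avg _"] sum_avg_v ..
  finally show ?thesis .
qed

lemma degree_two_vertex_low_degree_neighbour:
  assumes lower: "\<forall>f. 1 / 4 * sqnorm f \<le> sqnorm (avg f)"
    and upper: "\<forall>g. sqnorm (avg (avg g)) \<le> 5 / 4 * sqnorm (avg g) - 1 / 4 * sqnorm g"
    and "v \<in> V" and nb: "nbhd V E v = {a, b}" and "a \<noteq> b"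
  shows "deg V E a \<le> 2 \<or> deg V E b \<le> 2"
proof (rule ccontr)
  assume "\<not> ?thesis"
  then have deg3: "3 \<le> deg V E a" "3 \<le> deg V E b" by auto
  have aV: "a \<in> V" and bV: "b \<in> V" using nb nbhd_subset by auto
  define s where "s = (1 / real (deg V E a) + 1 / real (deg V E b)) / 2"
  define M where "M = max (real (deg V E a)) (real (deg V E b))"
  define \<delta>ab where "\<delta>ab = (\<lambda>y. of_bool (y = a) - of_bool (y = b) :: real)"
  define \<delta>v where "\<delta>v = (\<lambda>y. of_bool (y = v) :: real)"
  have "sqnorm \<delta>v = 2" "sqnorm (avg \<delta>v) = 2 * s"
    unfolding \<delta>v_def sqnorm_indicator[OF \<open>v \<in> V\<close>] sqnorm_avg_indicator[OF \<open>v \<in> V\<close>] nb s_def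
    using \<open>a \<noteq> b\<close> by (simp_all add: deg_def nb)
  have "(real (deg V E a) + real (deg V E b)) / 4 \<le> sqnorm (avg \<delta>ab)"
    using lower[rule_format, of \<delta>ab] sqnorm_indicator_diff[OF aV bV \<open>a \<noteq> b\<close>]
    unfolding \<delta>ab_def by simp
  then have "(real (deg V E a) + real (deg V E b)) / 4 / M\<^sup>2 \<le> sqnorm (avg \<delta>ab) / M\<^sup>2"
    by (rule divide_right_mono) simp
  then have "(real (deg V E a) + real (deg V E b)) / (4 * M\<^sup>2) \<le> sqnorm (avg \<delta>ab) / M\<^sup>2"
    by (simp add: divide_divide_eq_left)
  also have "\<dots> \<le> sqnorm (avg (avg \<delta>v)) - 2 * s\<^sup>2"
    using sqnorm_avg_avg_indicator_lower[OF \<open>v \<in> V\<close> nb \<open>a \<noteq> b\<close>]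
    unfolding \<delta>ab_def \<delta>v_def s_def M_def by simp
  also have "\<dots> \<le> 5 / 2 * s - 1 / 2 - 2 * s\<^sup>2"
    using upper[rule_format, of \<delta>v] \<open>sqnorm \<delta>v = 2\<close> \<open>sqnorm (avg \<delta>v) = 2 * s\<close> by simp
  finally show False
    using degree_pair_inequality[OF deg3] unfolding s_def M_def by simp
qed

end

theorem mainTheorem10:
  fixes V :: "'a set" and E :: "'a \<Rightarrow> 'a \<Rightarrow> bool"
  assumes "simple_graph V E"
    and "connected_graph V E"
    and "\<forall>v\<in>V. deg V E v > 0"
    and "card V \<ge> 3"
    and "min_degree V E = 2"
    and "eps_gap V E = 1/2"
  shows "\<forall>v\<in>V. deg V E v = 2 \<longrightarrow> (\<exists>u\<in>nbhd V E v. deg V E u = 2)"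
proof (intro ballI impI)
  fix v assume "v \<in> V" and "deg V E v = 2"
  interpret graph_no_isolated V E using assms(1,3) by unfold_locales
  have gap: "\<forall>l. kernel_eigenvalue V (avg_kernel V E) l \<longrightarrow> 1 / 2 \<le> \<bar>l\<bar>"
    using eps_gap_le[of "1 - _"] assms(6) by (simp add: laplacian_eigenvalue_iff)
  have lower: "\<forall>f. 1 / 4 * sqnorm f \<le> sqnorm (avg f)"
    using reversible_norm_lower_bound[OF finite_V _ deg_weight_pos reversible_avg_kernel _ gap]
      \<open>v \<in> V\<close> by (auto simp: power2_eq_square)
  have upper: "\<forall>g. sqnorm (avg (avg g)) \<le> 5 / 4 * sqnorm (avg g) - 1 / 4 * sqnorm g"
    using reversible_norm_upper_bound[OF reversible_avg_kernel, of "1 / 4"] avg_contraction lower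
    by simp
  obtain a b where "a \<noteq> b" and nb: "nbhd V E v = {a, b}"
    using \<open>deg V E v = 2\<close> unfolding deg_def by (auto simp: card_2_iff)
  have "a \<in> V" "b \<in> V" using nb nbhd_subset by auto
  then have "2 \<le> deg V E a" "2 \<le> deg V E b"
    using assms(5) finite_V unfolding min_degree_def by (metis Min_le finite_imageI image_eqI)+
  then show "\<exists>u\<in>nbhd V E v. deg V E u = 2"
    using degree_two_vertex_low_degree_neighbour[OF lower upper \<open>v \<in> V\<close> nb \<open>a \<noteq> b\<close>] nb by auto
qed

end
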